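(* If $\Gamma$ is well-formed and $\Gamma \vdash t:A$ is derivable in $\mathcal{T}'$, then $\Gamma \vdash t:A$ is derivable in $\mathcal{T}$.
   Context: Fix a (functional) Pure type system: a set $\mathcal{S}$ of sorts, for each sort $s$ an infinite set $\mathcal{V}_s$ of variables (pairwise disjoint), a functional relation $\mathcal{A}\subseteq \mathcal{S}\times\mathcal{S}$ (axioms) and a functional relation $\mathcal{R}\subseteq\mathcal{S}\times\mathcal{S}\times\mathcal{S}$ (rules). Terms are $t ::= x \mid s \mid (x:A)\rightarrow B \mid \lambda x:A\,t \mid t\,u$, and $\equiv$ denotes ($\beta$-)conversion. A context is a finite sequence $x_1:A_1,\dots,x_n:A_n$ with pairwise distinct variables. The usual system $\mathcal{T}$ has the rules: (sort) $\vdash s_1:s_2$ for $\langle s_1,s_2\rangle\in\mathcal{A}$ (empty context); (start) from $\Gamma\vdash A:s$ infer $\Gamma,x:A\vdash x:A$ for $x\in\mathcal{V}_s$; (weak) from $\Gamma\vdash t:A$ and $\Gamma\vdash B:s$ infer $\Gamma,x:B\vdash t:A$ for $x\in\mathcal{V}_s$; (prod) from $\Gamma\vdash A:s_1$ and $\Gamma,x:A\vdash B:s_2$ infer $\Gamma\vdash (x:A)\rightarrow B:s_3$ for $\langle s_1,s_2,s_3\rangle\in\mathcal{R}$; (abs) from $\Gamma\vdash A:s_1$, $\Gamma,x:A\vdash B:s_2$ and $\Gamma,x:A\vdash t:B$ infer $\Gamma\vdash\lambda x:A\,t:(x:A)\rightarrow B$ for $\langle s_1,s_2,s_3\rangle\in\mathcal{R}$;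 (app) from $\Gamma\vdash t:(x:A)\rightarrow B$ and $\Gamma\vdash u:A$ infer $\Gamma\vdash t\,u:(u/x)B$; (conv) from $\Gamma\vdash t:A$ and $\Gamma\vdash B:s$ infer $\Gamma\vdash t:B$ when $A\equiv B$. The system $\mathcal{T}'$ has the rules (prod), (abs), (app), (conv) as in $\mathcal{T}$ together with: (sort') $\Gamma\vdash s_1:s_2$ for any context $\Gamma$ and $\langle s_1,s_2\rangle\in\mathcal{A}$; (var') from $\Gamma,x:A,\Gamma'\vdash A:s$ infer $\Gamma,x:A,\Gamma'\vdash x:A$ for $x\in\mathcal{V}_s$; there is no weakening rule. Well-formed contexts are defined inductively: the empty context is well-formed, and if $\Gamma$ is well-formed and $\Gamma\vdash A:s$ is derivable in $\mathcal{T}$ for some sort $s$, then $\Gamma,x:A$ is well-formed. *)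

theory Defs
  imports Main
begin

text \<open>Terms of a Pure Type System over a type 's of sorts, with variables as
de Bruijn indices (terms are thus identified up to alpha-conversion).
Var i, Sort s, Pi A B = (x:A) -> B, Lam A t = lambda x:A. t, App t u.\<close>

datatype 's trm =
    Var nat
  | Sort 's
  | Pi "'s trm" "'s trm"
  | Lam "'s trm" "'s trm"
  | App "'s trm" "'s trm"

fun lift :: "nat \<Rightarrow> nat \<Rightarrow> 's trm \<Rightarrow> 's trm" where
  "lift k n (Var i) = (if i < k then Var i else Var (i + n))"
| "lift k n (Sort s) = Sort s"
| "lift k n (Pi A B) = Pi (lift k n A) (lift (Suc k) n B)"
| "lift k n (Lam A t) = Lam (lift k n A) (lift (Suc k) n t)"
| "lift k n (App t u) = App (lift k n t) (lift k n u)"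

text \<open>subst t k u : substitute u for the variable with index k in t
(capture-avoiding; indices above k are decremented).  subst B 0 u is (u/x)B.\<close>
fun subst :: "'s trm \<Rightarrow> nat \<Rightarrow> 's trm \<Rightarrow> 's trm" where
  "subst (Var i) k u = (if i < k then Var i else if i = k then lift 0 k u else Var (i - 1))"
| "subst (Sort s) k u = Sort s"
| "subst (Pi A B) k u = Pi (subst A k u) (subst B (Suc k) u)"
| "subst (Lam A t) k u = Lam (subst A k u) (subst t (Suc k) u)"
| "subst (App t v) k u = App (subst t k u) (subst v k u)"

inductive beta :: "'s trm \<Rightarrow> 's trm \<Rightarrow> bool" where
  beta_redex: "beta (App (Lam A t) u) (subst t 0 u)"
| beta_PiL: "beta A A' \<Longrightarrow> beta (Pi A B) (Pi A' B)"
| beta_PiR: "beta B B' \<Longrightarrow> beta (Pi A B) (Pi A B')"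
| beta_LamL: "beta A A' \<Longrightarrow> beta (Lam A t) (Lam A' t)"
| beta_LamR: "beta t t' \<Longrightarrow> beta (Lam A t) (Lam A t')"
| beta_AppL: "beta t t' \<Longrightarrow> beta (App t u) (App t' u)"
| beta_AppR: "beta u u' \<Longrightarrow> beta (App t u) (App t u')"

definition conv :: "'s trm \<Rightarrow> 's trm \<Rightarrow> bool" where
  "conv = (sup beta beta\<inverse>\<inverse>)\<^sup>*\<^sup>*"

definition functional_axioms :: "('s \<times> 's) set \<Rightarrow> bool" where
  "functional_axioms Ax \<longleftrightarrow> (\<forall>s1 s2 s2'. (s1, s2) \<in> Ax \<longrightarrow> (s1, s2') \<in> Ax \<longrightarrow> s2 = s2')"

definition functional_rules :: "('s \<times> 's \<times> 's) set \<Rightarrow> bool" where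
  "functional_rules R \<longleftrightarrow> (\<forall>s1 s2 s3 s3'. (s1, s2, s3) \<in> R \<longrightarrow> (s1, s2, s3') \<in> R \<longrightarrow> s3 = s3')"

text \<open>Contexts are lists of types, the most recently added declaration first:
the context  Gamma, x:A  is  A # Gamma, and the types are in de Bruijn scope of the
part of the context to their right.\<close>

inductive typT :: "('s \<times> 's) set \<Rightarrow> ('s \<times> 's \<times> 's) set \<Rightarrow> 's trm list \<Rightarrow> 's trm \<Rightarrow> 's trm \<Rightarrow> bool"
  for Ax R where
  T_sort: "(s1, s2) \<in> Ax \<Longrightarrow> typT Ax R [] (Sort s1) (Sort s2)"
| T_start: "typT Ax R \<Gamma> A (Sort s) \<Longrightarrow> typT Ax R (A # \<Gamma>) (Var 0) (lift 0 1 A)"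
| T_weak: "typT Ax R \<Gamma> t A \<Longrightarrow> typT Ax R \<Gamma> B (Sort s) \<Longrightarrow>
      typT Ax R (B # \<Gamma>) (lift 0 1 t) (lift 0 1 A)"
| T_prod: "typT Ax R \<Gamma> A (Sort s1) \<Longrightarrow> typT Ax R (A # \<Gamma>) B (Sort s2) \<Longrightarrow>
      (s1, s2, s3) \<in> R \<Longrightarrow> typT Ax R \<Gamma> (Pi A B) (Sort s3)"
| T_abs: "typT Ax R \<Gamma> A (Sort s1) \<Longrightarrow> typT Ax R (A # \<Gamma>) B (Sort s2) \<Longrightarrow>
      typT Ax R (A # \<Gamma>) t B \<Longrightarrow> (s1, s2, s3) \<in> R \<Longrightarrow> typT Ax R \<Gamma> (Lam A t) (Pi A B)"
| T_app: "typT Ax R \<Gamma> t (Pi A B) \<Longrightarrow> typT Ax R \<Gamma> u A \<Longrightarrow>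
      typT Ax R \<Gamma> (App t u) (subst B 0 u)"
| T_conv: "typT Ax R \<Gamma> t A \<Longrightarrow> typT Ax R \<Gamma> B (Sort s) \<Longrightarrow> conv A B \<Longrightarrow>
      typT Ax R \<Gamma> t B"

text \<open>In  Gamma, x:A, Gamma'  (= Gamma' @ A # Gamma), the variable x has index
length Gamma', and A seen from the whole context is lift 0 (Suc (length Gamma')) A.\<close>
inductive typT' :: "('s \<times> 's) set \<Rightarrow> ('s \<times> 's \<times> 's) set \<Rightarrow> 's trm list \<Rightarrow> 's trm \<Rightarrow> 's trm \<Rightarrow> bool"
  for Ax R where
  T'_sort: "(s1, s2) \<in> Ax \<Longrightarrow> typT' Ax R \<Gamma> (Sort s1) (Sort s2)"
| T'_var: "typT' Ax R (\<Gamma>' @ A # \<Gamma>) (lift 0 (Suc (length \<Gamma>')) A) (Sort s) \<Longrightarrow>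
      typT' Ax R (\<Gamma>' @ A # \<Gamma>) (Var (length \<Gamma>')) (lift 0 (Suc (length \<Gamma>')) A)"
| T'_prod: "typT' Ax R \<Gamma> A (Sort s1) \<Longrightarrow> typT' Ax R (A # \<Gamma>) B (Sort s2) \<Longrightarrow>
      (s1, s2, s3) \<in> R \<Longrightarrow> typT' Ax R \<Gamma> (Pi A B) (Sort s3)"
| T'_abs: "typT' Ax R \<Gamma> A (Sort s1) \<Longrightarrow> typT' Ax R (A # \<Gamma>) B (Sort s2) \<Longrightarrow>
      typT' Ax R (A # \<Gamma>) t B \<Longrightarrow> (s1, s2, s3) \<in> R \<Longrightarrow> typT' Ax R \<Gamma> (Lam A t) (Pi A B)"
| T'_app: "typT' Ax R \<Gamma> t (Pi A B) \<Longrightarrow> typT' Ax R \<Gamma> u A \<Longrightarrow>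
      typT' Ax R \<Gamma> (App t u) (subst B 0 u)"
| T'_conv: "typT' Ax R \<Gamma> t A \<Longrightarrow> typT' Ax R \<Gamma> B (Sort s) \<Longrightarrow> conv A B \<Longrightarrow>
      typT' Ax R \<Gamma> t B"

inductive wf_ctx :: "('s \<times> 's) set \<Rightarrow> ('s \<times> 's \<times> 's) set \<Rightarrow> 's trm list \<Rightarrow> bool"
  for Ax R where
  wf_nil: "wf_ctx Ax R []"
| wf_cons: "wf_ctx Ax R \<Gamma> \<Longrightarrow> typT Ax R \<Gamma> A (Sort s) \<Longrightarrow> wf_ctx Ax R (A # \<Gamma>)"

end

theory Submission
  imports Defs
begin

text \<open>Its two context-free axioms, sort' and var',
are recovered in T by weakening along the well-formed context, one declaration at a time.
The remaining rules are rules of T; the only extra obligation is that the extended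
contexts of prod and abs stay well-formed, which the induction hypothesis for the domain
provides.\<close>

lemma lift_lift: "lift k m (lift k n t) = lift k (m + n) t"
  by (induction t arbitrary: k) auto

lemma typT_sort_wf_ctx:
  assumes "wf_ctx Ax R \<Gamma>" and "(s1, s2) \<in> Ax"
  shows "typT Ax R \<Gamma> (Sort s1) (Sort s2)"
  using assms(1)
proof (induction rule: wf_ctx.induct)
  case wf_nil
  show ?case using assms(2) by (rule T_sort)
next
  case (wf_cons \<Gamma> A s)
  from T_weak[OF wf_cons.IH wf_cons.hyps(2)] show ?case by simp
qed

lemma typT_var_wf_ctx:
  assumes "wf_ctx Ax R (\<Gamma>' @ A # \<Gamma>)"
  shows "typT Ax R (\<Gamma>' @ A # \<Gamma>) (Var (length \<Gamma>')) (lift 0 (Suc (length \<Gamma>')) A)"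
  using assms
proof (induction \<Gamma>')
  case Nil
  then obtain s where "typT Ax R \<Gamma> A (Sort s)" by (auto elim: wf_ctx.cases)
  from T_start[OF this] show ?case by simp
next
  case (Cons B \<Gamma>')
  then obtain s where wf: "wf_ctx Ax R (\<Gamma>' @ A # \<Gamma>)"
    and B: "typT Ax R (\<Gamma>' @ A # \<Gamma>) B (Sort s)"
    by (auto elim: wf_ctx.cases)
  from T_weak[OF Cons.IH[OF wf] B] show ?case by (simp add: lift_lift)
qed

lemma typT'_imp_typT:
  assumes "typT' Ax R \<Gamma> t A" and "wf_ctx Ax R \<Gamma>"
  shows "typT Ax R \<Gamma> t A"
  using assms
proof (induction rule: typT'.induct)
  case (T'_sort s1 s2 \<Gamma>)
  show ?case by (rule typT_sort_wf_ctx[OF T'_sort.prems T'_sort.hyps])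
next
  case (T'_var \<Gamma>' A \<Gamma> s)
  show ?case by (rule typT_var_wf_ctx[OF T'_var.prems])
next
  case (T'_prod \<Gamma> A s1 B s2 s3)
  then have A: "typT Ax R \<Gamma> A (Sort s1)" by blast
  with T'_prod have "wf_ctx Ax R (A # \<Gamma>)" by (blast intro: wf_cons)
  with T'_prod A show ?case by (blast intro: T_prod)
next
  case (T'_abs \<Gamma> A s1 B s2 t s3)
  then have A: "typT Ax R \<Gamma> A (Sort s1)" by blast
  with T'_abs have "wf_ctx Ax R (A # \<Gamma>)" by (blast intro: wf_cons)
  with T'_abs A show ?case by (blast intro: T_abs)
next
  case (T'_app \<Gamma> t A B u)
  then show ?case by (blast intro: T_app)
next
  case (T'_conv \<Gamma> t A B s)
  then show ?case by (blast intro: T_conv)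
qed

theorem mainTheorem5:
  fixes Ax :: "('s \<times> 's) set" and R :: "('s \<times> 's \<times> 's) set"
    and \<Gamma> :: "'s trm list" and t A :: "'s trm"
  assumes "functional_axioms Ax" and "functional_rules R"
    and "wf_ctx Ax R \<Gamma>"
    and "typT' Ax R \<Gamma> t A"
  shows "typT Ax R \<Gamma> t A"
  using assms(4,3) by (rule typT'_imp_typT)

end
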